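(* Let $E$ be a directed graph and $G(E)$ its graph inverse semigroup. The following are equivalent: (1) the semigroup operation of $G(E)$ is jointly continuous with respect to the topology $\tau_c$; (2) for each non-zero $uv^{-1}\in G(E)$ the set $M_{uv^{-1}}=\{(ab^{-1},cd^{-1})\in G(E)\times G(E)\mid ab^{-1}\cdot cd^{-1}=uv^{-1}\}$ is finite; (3) for each vertex $e\in E^0$ the set $I_e=\{u\in\operatorname{Path}(E)\mid r(u)=e\}$ is finite; (4) $G(E)$ contains neither a subsemigroup isomorphic to the bicyclic monoid nor a subsemigroup isomorphic to the semigroup $\mathcal{M}_\omega$ of $\omega\times\omega$-matrix units; (5) each $\mathcal{D}$-class of $G(E)$ is finite.
   Context: A directed graph $E=(E^0,E^1,r,s)$ consists of disjoint sets $E^0$ (vertices), $E^1$ (edges) and maps $s,r:E^1\to E^0$. Paths: vertices (length zero) and finite sequences of edges $e_1\ldots e_n$ with $r(e_i)=s(e_{i+1})$; $\operatorname{Path}(E)$ is the set of all paths, with $s(e_1\ldots e_n)=s(e_1)$, $r(e_1\ldots e_n)=r(e_n)$, $s(v)=r(v)=v$ for vertices. The graph inverse semigroup $G(E)$ is the semigroup with zero $0$ generated by $E^0$, $E^1$, and $E^{-1}=\{e^{-1}\mid e\in E^1\}$ subject to: for $a,b\in E^0$, $e,f\in E^1$: $ab=a$ if $a=b$, else $0$; $s(e)e=er(e)=e$; $e^{-1}s(e)=r(e)e^{-1}=e^{-1}$; $e^{-1}f=r(e)$ if $e=f$, else $0$. Every non-zero element is uniquely $uv^{-1}$ with $u,v\in\operatorname{Path}(E)$,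 $r(u)=r(v)$, with product $u_1v_1^{-1}\cdot u_2v_2^{-1}=u_1wv_2^{-1}$ if $u_2=v_1w$, $=u_1(v_2w)^{-1}$ if $v_1=u_2w$ (for a path $w$), and $0$ otherwise. The topology $\tau_c$ on $G(E)$: every non-zero element is isolated, and the open neighborhoods of $0$ are exactly the cofinite subsets of $G(E)$ containing $0$. The bicyclic monoid is the monoid generated by $p,q$ subject to $pq=1$. For a set $X$, $\mathcal{M}_X=(X\times X)\cup\{0\}$ with $(a,b)(c,d)=(a,d)$ if $b=c$, $0$ otherwise, and $0$ a zero. $\mathcal{D}$ denotes Green's $\mathcal{D}$-relation. *)

theory Defs
  imports "HOL-Analysis.Analysis" "HOL-Library.Sublist"
begin

text \<open>A directed graph is given by a vertex set V :: 'v set, an edge set Ed :: 'e set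
  and source/range maps s r :: 'e => 'v (only relevant on Ed).  A path is represented
  as a pair (v, es): a start vertex v and a list of edges es.  The empty list
  represents the length-zero path v; a nonempty list e1...en must start at v = s e1
  and be consecutive (r ei = s e(i+1)).\<close>

type_synonym ('v,'e) gpath = "'v \<times> 'e list"

definition is_path :: "'v set \<Rightarrow> 'e set \<Rightarrow> ('e \<Rightarrow> 'v) \<Rightarrow> ('e \<Rightarrow> 'v) \<Rightarrow> ('v,'e) gpath \<Rightarrow> bool" where
  "is_path V Ed s r p \<longleftrightarrow> fst p \<in> V \<and> set (snd p) \<subseteq> Ed
     \<and> (snd p \<noteq> [] \<longrightarrow> s (hd (snd p)) = fst p)
     \<and> (\<forall>i. Suc i < length (snd p) \<longrightarrow> r (snd p ! i) = s (snd p ! Suc i))"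

definition prange :: "('e \<Rightarrow> 'v) \<Rightarrow> ('v,'e) gpath \<Rightarrow> 'v" where
  "prange r p = (if snd p = [] then fst p else r (last (snd p)))"

text \<open>Elements of the graph inverse semigroup: zero, or u v^{-1}.\<close>
datatype ('v,'e) gis = GZero | GEl "('v,'e) gpath" "('v,'e) gpath"

definition gis_carrier :: "'v set \<Rightarrow> 'e set \<Rightarrow> ('e \<Rightarrow> 'v) \<Rightarrow> ('e \<Rightarrow> 'v) \<Rightarrow> ('v,'e) gis set" where
  "gis_carrier V Ed s r = insert GZero
     {GEl u v | u v. is_path V Ed s r u \<and> is_path V Ed s r v \<and> prange r u = prange r v}"

text \<open>Product: u1 v1^{-1} . u2 v2^{-1} = u1 w v2^{-1} if u2 = v1 w,
  = u1 (v2 w)^{-1} if v1 = u2 w, and 0 otherwise.\<close>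
fun gis_mult :: "('v,'e) gis \<Rightarrow> ('v,'e) gis \<Rightarrow> ('v,'e) gis" where
  "gis_mult GZero y = GZero"
| "gis_mult (GEl u1 v1) GZero = GZero"
| "gis_mult (GEl u1 v1) (GEl u2 v2) =
     (if fst u2 = fst v1 \<and> prefix (snd v1) (snd u2)
      then GEl (fst u1, snd u1 @ drop (length (snd v1)) (snd u2)) v2
      else if fst v1 = fst u2 \<and> prefix (snd u2) (snd v1)
      then GEl u1 (fst v2, snd v2 @ drop (length (snd u2)) (snd v1))
      else GZero)"

text \<open>The topology tau_c on a carrier G with zero z: nonzero points isolated,
  neighbourhoods of z are the cofinite subsets containing z.\<close>
definition tau_c :: "'a set \<Rightarrow> 'a \<Rightarrow> 'a topology" where
  "tau_c G z = topology (\<lambda>U. U \<subseteq> G \<and> (z \<in> U \<longrightarrow> finite (G - U)))"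

text \<open>Bicyclic monoid: element (i,j) stands for q^i p^j, where pq = 1.\<close>
fun bicyclic_mult :: "nat \<times> nat \<Rightarrow> nat \<times> nat \<Rightarrow> nat \<times> nat" where
  "bicyclic_mult (i,j) (k,l) = (i + k - min j k, j + l - min j k)"

text \<open>Semigroup of omega x omega matrix units M_omega; None is the zero.\<close>
fun matunit_mult :: "(nat \<times> nat) option \<Rightarrow> (nat \<times> nat) option \<Rightarrow> (nat \<times> nat) option" where
  "matunit_mult (Some (a,b)) (Some (c,d)) = (if b = c then Some (a,d) else None)"
| "matunit_mult _ _ = None"

definition has_iso_subsemigroup ::
  "'a set \<Rightarrow> ('a \<Rightarrow> 'a \<Rightarrow> 'a) \<Rightarrow> 'b set \<Rightarrow> ('b \<Rightarrow> 'b \<Rightarrow> 'b) \<Rightarrow> bool" where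
  "has_iso_subsemigroup G m A n \<longleftrightarrow>
     (\<exists>S f. S \<subseteq> G \<and> (\<forall>x\<in>S. \<forall>y\<in>S. m x y \<in> S) \<and> bij_betw f A S
        \<and> (\<forall>x\<in>A. \<forall>y\<in>A. f (n x y) = m (f x) (f y)))"

definition greenL :: "'a set \<Rightarrow> ('a \<Rightarrow> 'a \<Rightarrow> 'a) \<Rightarrow> 'a \<Rightarrow> 'a \<Rightarrow> bool" where
  "greenL G m a b \<longleftrightarrow> (a = b \<or> (\<exists>x\<in>G. a = m x b)) \<and> (b = a \<or> (\<exists>x\<in>G. b = m x a))"

definition greenR :: "'a set \<Rightarrow> ('a \<Rightarrow> 'a \<Rightarrow> 'a) \<Rightarrow> 'a \<Rightarrow> 'a \<Rightarrow> bool" where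
  "greenR G m a b \<longleftrightarrow> (a = b \<or> (\<exists>x\<in>G. a = m b x)) \<and> (b = a \<or> (\<exists>x\<in>G. b = m a x))"

definition greenD :: "'a set \<Rightarrow> ('a \<Rightarrow> 'a \<Rightarrow> 'a) \<Rightarrow> 'a \<Rightarrow> 'a \<Rightarrow> bool" where
  "greenD G m a b \<longleftrightarrow> (\<exists>c\<in>G. greenL G m a c \<and> greenR G m c b)"

end

theory Submission
  imports Defs
begin

text \<open>Everything is governed by the sets \<open>I\<^sub>e\<close> of paths ending at a vertex \<open>e\<close>.
  A product \<open>ab\<^sup>-\<^sup>1 \<cdot> cd\<^sup>-\<^sup>1 = uv\<^sup>-\<^sup>1 \<noteq> 0\<close> forces \<open>a\<close> to be a prefix of \<open>u\<close> and \<open>d\<close>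
  a prefix of \<open>v\<close>, while \<open>b\<close> and \<open>c\<close> end where \<open>a\<close> and \<open>d\<close> end; so finite sets \<open>I\<^sub>e\<close>
  make all fibres of the multiplication over nonzero elements finite, which is exactly
  what continuity in \<open>\<tau>\<^sub>c\<close> needs, and they also make the \<open>\<D>\<close>-class of \<open>uv\<^sup>-\<^sup>1\<close>, which
  lies in \<open>{pq\<^sup>-\<^sup>1 | p, q \<in> I\<^bsub>r(v)\<^esub>}\<close>, finite.  Conversely \<open>ee\<^sup>-\<^sup>1 = ea\<^sup>-\<^sup>1 \<cdot> ae\<^sup>-\<^sup>1\<close> for every
  \<open>a \<in> I\<^sub>e\<close>, so continuity at \<open>(0, 0)\<close> forces \<open>I\<^sub>e\<close> to be finite.  If \<open>I\<^sub>e\<close> is infinite,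
  either \<open>e\<close> lies on a cycle \<open>c\<close> and \<open>(i, j) \<mapsto> c\<^sup>i(c\<^sup>j)\<^sup>-\<^sup>1\<close> embeds the bicyclic monoid,
  or no path in \<open>I\<^sub>e\<close> is a proper prefix of another and any injective sequence
  \<open>a\<^sub>0, a\<^sub>1, \<dots>\<close> in \<open>I\<^sub>e\<close> yields matrix units \<open>a\<^sub>ia\<^sub>j\<^sup>-\<^sup>1\<close>.  Both semigroups have an infinite
  \<open>\<D>\<close>-class, and any embedding carries it into \<open>G(E)\<close>.\<close>

section \<open>The topology \<open>\<tau>\<^sub>c\<close> and continuity of a multiplication with zero\<close>

lemma openin_tau_c: "openin (tau_c G z) U \<longleftrightarrow> U \<subseteq> G \<and> (z \<in> U \<longrightarrow> finite (G - U))"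
proof -
  have "finite (G - \<Union>K)" if "k \<in> K" "finite (G - k)" for K k
    using that by (meson Diff_mono Sup_upper finite_subset order_refl)
  then have "istopology (\<lambda>U. U \<subseteq> G \<and> (z \<in> U \<longrightarrow> finite (G - U)))"
    unfolding istopology_def by (auto simp: Diff_Int)
  then show ?thesis
    by (simp add: tau_c_def)
qed

lemma topspace_tau_c: "topspace (tau_c G z) = G"
proof
  show "G \<subseteq> topspace (tau_c G z)"
    by (rule openin_subset) (simp add: openin_tau_c)
  show "topspace (tau_c G z) \<subseteq> G"
    unfolding topspace_def openin_tau_c by blast
qed

lemma finite_tau_c_mult_outside:
  assumes closed: "\<And>x y. x \<in> G \<Longrightarrow> y \<in> G \<Longrightarrow> m x y \<in> G"
    and fibres: "\<And>w. w \<in> G \<Longrightarrow> w \<noteq> z \<Longrightarrow> finite {(x, y). x \<in> G \<and> y \<in> G \<and> m x y = w}"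
    and "openin (tau_c G z) U" "z \<in> U"
  shows "finite {(x, y). x \<in> G \<and> y \<in> G \<and> m x y \<notin> U}"
proof -
  have "{(x, y). x \<in> G \<and> y \<in> G \<and> m x y \<notin> U} = (\<Union>w\<in>G - U. {(x, y). x \<in> G \<and> y \<in> G \<and> m x y = w})"
    using closed by auto
  moreover have "finite (G - U)"
    using assms(3,4) by (simp add: openin_tau_c)
  ultimately show ?thesis
    using fibres assms(4) by auto
qed

lemma openin_tau_c_mult_preimage:
  assumes closed: "\<And>x y. x \<in> G \<Longrightarrow> y \<in> G \<Longrightarrow> m x y \<in> G"
    and zero_left: "\<And>y. m z y = z" and zero_right: "\<And>x. m x z = z"
    and fibres: "\<And>w. w \<in> G \<Longrightarrow> w \<noteq> z \<Longrightarrow> finite {(x, y). x \<in> G \<and> y \<in> G \<and> m x y = w}"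
    and U: "openin (tau_c G z) U"
  shows "openin (prod_topology (tau_c G z) (tau_c G z)) {p \<in> G \<times> G. (\<lambda>(x, y). m x y) p \<in> U}"
    (is "openin _ ?W")
  unfolding openin_prod_topology_alt
proof (intro allI impI)
  fix x y
  assume "(x, y) \<in> ?W"
  then have xy: "x \<in> G" "y \<in> G" "m x y \<in> U"
    by auto
  have zU: "z \<in> U" if "x = z \<or> y = z"
    using xy that zero_left zero_right by auto
  define bad where "bad = {(x, y). x \<in> G \<and> y \<in> G \<and> m x y \<notin> U}"
  have finite_bad: "finite bad" if "z \<in> U"
    unfolding bad_def using finite_tau_c_mult_outside[OF closed fibres U that] .
  have z_bad: "z \<notin> fst ` bad" "z \<notin> snd ` bad" if "z \<in> U"
    using that zero_left zero_right by (force simp: bad_def)+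
  \<comment> \<open>A nonzero point is isolated; the zero gets the cofinite neighbourhood avoiding
    every coordinate of a pair mapped outside \<open>U\<close>.\<close>
  define nbhd where "nbhd x C = (if x = z then G - C else {x})" for x C
  have open_nbhd: "openin (tau_c G z) (nbhd x C) \<and> x \<in> nbhd x C"
    if "x \<in> G" "x = z \<Longrightarrow> finite C \<and> z \<notin> C" for x C
    using that by (auto simp: nbhd_def openin_tau_c Diff_Diff_Int finite_Int)
  have "(x', y') \<in> ?W" if x': "x' \<in> nbhd x (fst ` bad)" and y': "y' \<in> nbhd y (snd ` bad)" for x' y'
  proof -
    have "x' \<in> G" "y' \<in> G"
      using x' y' xy by (auto simp: nbhd_def split: if_splits)
    moreover have "(x', y') \<notin> bad"
    proof
      assume "(x', y') \<in> bad"
      then have "x' = x" "y' = y"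
        using x' y' by (force simp: nbhd_def split: if_splits)+
      with \<open>(x', y') \<in> bad\<close> xy show False
        by (simp add: bad_def)
    qed
    ultimately show ?thesis
      by (simp add: bad_def)
  qed
  then have "nbhd x (fst ` bad) \<times> nbhd y (snd ` bad) \<subseteq> ?W"
    by blast
  then show "\<exists>A B. openin (tau_c G z) A \<and> openin (tau_c G z) B \<and> x \<in> A \<and> y \<in> B \<and> A \<times> B \<subseteq> ?W"
    using open_nbhd[of x "fst ` bad"] open_nbhd[of y "snd ` bad"] xy zU z_bad finite_bad
    by blast
qed

lemma continuous_map_tau_c_mult:
  assumes closed: "\<And>x y. x \<in> G \<Longrightarrow> y \<in> G \<Longrightarrow> m x y \<in> G"
    and "\<And>y. m z y = z" "\<And>x. m x z = z"
    and "\<And>w. w \<in> G \<Longrightarrow> w \<noteq> z \<Longrightarrow> finite {(x, y). x \<in> G \<and> y \<in> G \<and> m x y = w}"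
  shows "continuous_map (prod_topology (tau_c G z) (tau_c G z)) (tau_c G z) (\<lambda>(x, y). m x y)"
  using closed openin_tau_c_mult_preimage[OF assms]
  by (auto simp: continuous_map_def topspace_prod_topology topspace_tau_c)

lemma continuous_map_tau_c_mult_fibre:
  assumes cont: "continuous_map (prod_topology (tau_c G z) (tau_c G z)) (tau_c G z) (\<lambda>(x, y). m x y)"
    and "z \<in> G" "m z z = z" "w \<noteq> z"
  obtains F where "finite F" "\<And>x y. x \<in> G \<Longrightarrow> y \<in> G \<Longrightarrow> m x y = w \<Longrightarrow> x \<in> F \<or> y \<in> F"
proof -
  let ?W = "{p \<in> G \<times> G. (\<lambda>(x, y). m x y) p \<in> G - {w}}"
  have "openin (tau_c G z) (G - {w})"
    by (auto simp: openin_tau_c intro: finite_subset[of _ "{w}"])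
  then have "openin (prod_topology (tau_c G z) (tau_c G z)) ?W"
    using openin_continuous_map_preimage[OF cont] by (simp only: topspace_prod_topology topspace_tau_c)
  moreover have "(z, z) \<in> ?W"
    using assms by auto
  ultimately obtain A B where "openin (tau_c G z) A" "openin (tau_c G z) B" "z \<in> A" "z \<in> B"
    and "A \<times> B \<subseteq> ?W"
    unfolding openin_prod_topology_alt by meson
  then show ?thesis
    by (intro that[of "(G - A) \<union> (G - B)"]) (auto simp: openin_tau_c)
qed

section \<open>Embeddings and Green's \<open>\<D>\<close>-classes\<close>

lemma has_iso_subsemigroupI:
  assumes "f ` A \<subseteq> G" "inj_on f A"
    and "\<And>x y. x \<in> A \<Longrightarrow> y \<in> A \<Longrightarrow> n x y \<in> A"
    and "\<And>x y. x \<in> A \<Longrightarrow> y \<in> A \<Longrightarrow> f (n x y) = m (f x) (f y)"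
  shows "has_iso_subsemigroup G m A n"
  unfolding has_iso_subsemigroup_def
proof (intro exI[of _ "f ` A"] exI[of _ f] conjI)
  show "\<forall>x\<in>f ` A. \<forall>y\<in>f ` A. m x y \<in> f ` A"
  proof (intro ballI)
    fix x y
    assume "x \<in> f ` A" "y \<in> f ` A"
    then obtain a b where "a \<in> A" "b \<in> A" "x = f a" "y = f b"
      by blast
    then have "m x y = f (n a b)" "n a b \<in> A"
      using assms(3,4) by simp_all
    then show "m x y \<in> f ` A"
      by simp
  qed
qed (use assms in \<open>simp_all add: bij_betw_def\<close>)

lemma greenL_image:
  assumes "\<And>x y. x \<in> A \<Longrightarrow> y \<in> A \<Longrightarrow> f (n x y) = m (f x) (f y)"
    and "f ` A \<subseteq> G" "a \<in> A" "b \<in> A" "greenL A n a b"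
  shows "greenL G m (f a) (f b)"
proof -
  have step: "f c = f d \<or> (\<exists>y\<in>G. f c = m y (f d))" if cd: "c = d \<or> (\<exists>x\<in>A. c = n x d)" and d: "d \<in> A" for c d
  proof (cases "c = d")
    case False
    then obtain x where "x \<in> A" "c = n x d"
      using cd by blast
    then have "f x \<in> G" "f c = m (f x) (f d)"
      using assms(1,2) d by auto
    then show ?thesis
      by blast
  qed simp
  show ?thesis
    using assms(3-5) step[of a b] step[of b a] unfolding greenL_def by fast
qed

lemma greenR_image:
  assumes "\<And>x y. x \<in> A \<Longrightarrow> y \<in> A \<Longrightarrow> f (n x y) = m (f x) (f y)"
    and "f ` A \<subseteq> G" "a \<in> A" "b \<in> A" "greenR A n a b"
  shows "greenR G m (f a) (f b)"
proof -
  have step: "f c = f d \<or> (\<exists>y\<in>G. f c = m (f d) y)" if cd: "c = d \<or> (\<exists>x\<in>A. c = n d x)" and d: "d \<in> A" for c d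
  proof (cases "c = d")
    case False
    then obtain x where "x \<in> A" "c = n d x"
      using cd by blast
    then have "f x \<in> G" "f c = m (f d) (f x)"
      using assms(1,2) d by auto
    then show ?thesis
      by blast
  qed simp
  show ?thesis
    using assms(3-5) step[of a b] step[of b a] unfolding greenR_def by fast
qed

lemma not_has_iso_subsemigroup_if_finite_greenD:
  assumes fin: "\<forall>x\<in>G. finite {y \<in> G. greenD G m x y}"
    and "a \<in> A" "infinite {b \<in> A. greenD A n a b}"
  shows "\<not> has_iso_subsemigroup G m A n"
proof
  assume "has_iso_subsemigroup G m A n"
  then obtain S f where "S \<subseteq> G" "bij_betw f A S" and hom: "\<forall>x\<in>A. \<forall>y\<in>A. f (n x y) = m (f x) (f y)"
    unfolding has_iso_subsemigroup_def by blast
  then have fA: "f ` A \<subseteq> G" and inj: "inj_on f A"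
    by (auto simp: bij_betw_def)
  have "greenD G m (f a) (f b)" if b: "b \<in> A" and D: "greenD A n a b" for b
  proof -
    obtain c where "c \<in> A" "greenL A n a c" "greenR A n c b"
      using D unfolding greenD_def by blast
    then show ?thesis
      using greenL_image[of A f n m G a c] greenR_image[of A f n m G c b] hom fA assms(2) b
      unfolding greenD_def by auto
  qed
  then have "f ` {b \<in> A. greenD A n a b} \<subseteq> {y \<in> G. greenD G m (f a) y}"
    using fA by auto
  moreover have "inj_on f {b \<in> A. greenD A n a b}"
    using inj by (rule inj_on_subset) auto
  then have "infinite (f ` {b \<in> A. greenD A n a b})"
    using assms(3) by (simp add: finite_image_iff)
  ultimately have "infinite {y \<in> G. greenD G m (f a) y}"
    using finite_subset by blast
  moreover have "f a \<in> G"
    using fA assms(2) by blast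
  ultimately show False
    using fin by blast
qed

lemma infinite_greenD_class_bicyclic: "infinite {b \<in> UNIV. greenD UNIV bicyclic_mult (0, 0) b}"
proof -
  have "greenD UNIV bicyclic_mult (0, 0) (i, j)" for i j
  proof -
    have "(0, 0) = bicyclic_mult (0, i) (i, 0)" "(i, 0) = bicyclic_mult (i, 0) (0, 0)"
      "(i, 0) = bicyclic_mult (i, j) (j, 0)" "(i, j) = bicyclic_mult (i, 0) (0, j)"
      by simp_all
    then show ?thesis
      unfolding greenD_def greenL_def greenR_def by blast
  qed
  then have "{b \<in> UNIV. greenD UNIV bicyclic_mult (0, 0) b} = UNIV"
    by auto
  then show ?thesis
    by (simp add: finite_prod)
qed

lemma infinite_greenD_class_matunit: "infinite {b \<in> UNIV. greenD UNIV matunit_mult (Some (0, 0)) b}"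
proof -
  have "greenD UNIV matunit_mult (Some (0, 0)) (Some (i, j))" for i j
  proof -
    have "Some (0, 0) = matunit_mult (Some (0, i)) (Some (i, 0))"
      "Some (i, 0) = matunit_mult (Some (i, 0)) (Some (0, 0))"
      "Some (i, 0) = matunit_mult (Some (i, j)) (Some (j, 0))"
      "Some (i, j) = matunit_mult (Some (i, 0)) (Some (0, j))"
      by simp_all
    then show ?thesis
      unfolding greenD_def greenL_def greenR_def by blast
  qed
  then have "range Some \<subseteq> {b \<in> UNIV. greenD UNIV matunit_mult (Some (0, 0)) b}"
    by auto
  moreover have "infinite (range (Some :: nat \<times> nat \<Rightarrow> _))"
    by (simp add: finite_image_iff finite_prod)
  ultimately show ?thesis
    using finite_subset by blast
qed

section \<open>Paths and the multiplication of \<open>G(E)\<close>\<close>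

lemma prange_Nil [simp]: "prange r (v, []) = v"
  by (simp add: prange_def)

lemma prange_Cons: "prange r (v, e # es) = prange r (r e, es)"
  by (simp add: prange_def)

lemma prange_append: "prange r (v, xs @ ys) = prange r (prange r (v, xs), ys)"
  by (simp add: prange_def)

lemma is_path_Nil: "is_path V Ed s r (v, []) \<longleftrightarrow> v \<in> V"
  by (simp add: is_path_def)

lemma is_path_Cons:
  assumes "r ` Ed \<subseteq> V"
  shows "is_path V Ed s r (v, e # es) \<longleftrightarrow> v \<in> V \<and> e \<in> Ed \<and> s e = v \<and> is_path V Ed s r (r e, es)"
proof (cases es)
  case (Cons e' es')
  then show ?thesis
    using assms by (auto simp: is_path_def All_less_Suc2[simplified])
qed (use assms in \<open>auto simp: is_path_def\<close>)

definition path_prefix :: "('v, 'e) gpath \<Rightarrow> ('v, 'e) gpath \<Rightarrow> bool" where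
  "path_prefix p q \<longleftrightarrow> fst p = fst q \<and> prefix (snd p) (snd q)"

lemma path_prefix_antisym: "path_prefix p q \<Longrightarrow> path_prefix q p \<Longrightarrow> p = q"
  unfolding path_prefix_def by (simp add: prefix_order.antisym prod_eq_iff)

lemma finite_path_prefixes: "finite {p. path_prefix p q}"
proof -
  have "{p. path_prefix p q} = Pair (fst q) ` set (prefixes (snd q))"
    by (auto simp: path_prefix_def)
  then show ?thesis
    by simp
qed

lemma gis_mult_zero_right [simp]: "gis_mult x GZero = GZero"
  by (cases x) simp_all

lemma gis_mult_append_left: "gis_mult (GEl a (v, ys)) (GEl (v, ys @ w) d) = GEl (fst a, snd a @ w) d"
  by simp

lemma gis_mult_append_right: "gis_mult (GEl a (v, ys @ w)) (GEl (v, ys) d) = GEl a (fst d, snd d @ w)"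
  by (cases "w = []") simp_all

lemma gis_mult_cancel [simp]: "gis_mult (GEl a b) (GEl b d) = GEl a d"
  by simp

lemma gis_mult_incomparable:
  "\<not> path_prefix b c \<Longrightarrow> \<not> path_prefix c b \<Longrightarrow> gis_mult (GEl a b) (GEl c d) = GZero"
  by (auto simp: path_prefix_def)

lemma gis_mult_eq_GEl_left: "gis_mult (GEl a b) y = GEl p q \<Longrightarrow> path_prefix a p"
  by (cases y) (auto simp: path_prefix_def split: if_splits)

lemma gis_mult_eq_GEl_right: "gis_mult x (GEl c d) = GEl p q \<Longrightarrow> path_prefix d q"
  by (cases x) (auto simp: path_prefix_def split: if_splits)

lemma greenL_GEl:
  assumes "greenL G gis_mult (GEl u v) c"
  shows "\<exists>u'. c = GEl u' v"
proof (cases "c = GEl u v")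
  case False
  then obtain x y where c: "c = gis_mult x (GEl u v)" and uv: "GEl u v = gis_mult y c"
    using assms unfolding greenL_def by auto
  obtain u' v' where c': "c = GEl u' v'"
    using uv by (cases c) auto
  have "path_prefix v v'"
    using gis_mult_eq_GEl_right[of x u v u' v'] c c' by simp
  moreover have "path_prefix v' v"
    using gis_mult_eq_GEl_right[of y u' v' u v] uv c' by simp
  ultimately show ?thesis
    using path_prefix_antisym c' by blast
qed simp

lemma greenR_GEl:
  assumes "greenR G gis_mult (GEl u v) c"
  shows "\<exists>v'. c = GEl u v'"
proof (cases "c = GEl u v")
  case False
  then obtain x y where c: "c = gis_mult (GEl u v) x" and uv: "GEl u v = gis_mult c y"
    using assms unfolding greenR_def by auto
  obtain u' v' where c': "c = GEl u' v'"
    using uv by (cases c) auto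
  have "path_prefix u u'"
    using gis_mult_eq_GEl_left[of u v x u' v'] c c' by simp
  moreover have "path_prefix u' u"
    using gis_mult_eq_GEl_left[of u' v' y u v] uv c' by simp
  ultimately show ?thesis
    using path_prefix_antisym c' by blast
qed simp

lemma greenD_GZero:
  assumes "greenD G gis_mult GZero b"
  shows "b = GZero"
proof -
  obtain c where L: "greenL G gis_mult GZero c" and R: "greenR G gis_mult c b"
    using assms unfolding greenD_def by blast
  from L have "c = GZero"
    unfolding greenL_def by auto
  with R show ?thesis
    unfolding greenR_def by auto
qed

lemma GEl_in_gis_carrier:
  "GEl u v \<in> gis_carrier V Ed s r \<longleftrightarrow> is_path V Ed s r u \<and> is_path V Ed s r v \<and> prange r u = prange r v"
  unfolding gis_carrier_def by blast

lemma GZero_in_gis_carrier: "GZero \<in> gis_carrier V Ed s r"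
  by (simp add: gis_carrier_def)

section \<open>The sets \<open>I\<^sub>e\<close> of paths ending at a vertex\<close>

locale graph_inverse_semigroup =
  fixes V :: "'v set" and Ed :: "'e set" and s r :: "'e \<Rightarrow> 'v"
  assumes range_in_V: "r ` Ed \<subseteq> V"
begin

abbreviation epath :: "('v, 'e) gpath \<Rightarrow> bool" where
  "epath \<equiv> is_path V Ed s r"

abbreviation GE :: "('v, 'e) gis set" where
  "GE \<equiv> gis_carrier V Ed s r"

abbreviation paths_to :: "'v \<Rightarrow> ('v, 'e) gpath set" where
  "paths_to e \<equiv> {u. epath u \<and> prange r u = e}"

definition on_cycle :: "'v \<Rightarrow> bool" where
  "on_cycle e \<longleftrightarrow> (\<exists>cs. cs \<noteq> [] \<and> epath (e, cs) \<and> prange r (e, cs) = e)"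

lemma epath_append: "epath (v, xs @ ys) \<longleftrightarrow> epath (v, xs) \<and> epath (prange r (v, xs), ys)"
proof (induction xs arbitrary: v)
  case Nil
  then show ?case
    by (auto simp: is_path_Nil is_path_def)
next
  case (Cons e xs)
  then show ?case
    using range_in_V by (auto simp: is_path_Cons prange_Cons)
qed

lemma prange_in_V:
  assumes "epath p"
  shows "prange r p \<in> V"
proof (cases "snd p" rule: rev_exhaust)
  case Nil
  then show ?thesis
    using assms by (simp add: is_path_def prange_def)
next
  case (snoc es e)
  then have "epath (fst p, es @ [e])"
    using assms by (metis prod.collapse)
  then have "e \<in> Ed"
    by (simp add: epath_append is_path_Cons[OF range_in_V])
  then show ?thesis
    using snoc range_in_V by (auto simp: prange_def)
qed

lemma paths_to_outside_V: "e \<notin> V \<Longrightarrow> paths_to e = {}"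
  using prange_in_V by auto

lemma epath_append_same_range:
  assumes "epath (va, as)" "prange r (va, as) = prange r (vb, bs)" "epath (vb, bs @ w)"
  shows "epath (va, as @ w) \<and> prange r (va, as @ w) = prange r (vb, bs @ w)"
  using assms by (simp add: epath_append prange_append)

lemma gis_mult_closed:
  assumes "x \<in> GE" "y \<in> GE"
  shows "gis_mult x y \<in> GE"
proof (cases "x = GZero \<or> y = GZero")
  case True
  then show ?thesis
    using GZero_in_gis_carrier by (cases x) auto
next
  case False
  then obtain va as vb bs vc cs vd ds
    where x: "x = GEl (va, as) (vb, bs)" and y: "y = GEl (vc, cs) (vd, ds)"
    by (metis gis.exhaust prod.collapse)
  have ab: "epath (va, as)" "prange r (va, as) = prange r (vb, bs)" "epath (vb, bs)"
    and cd: "epath (vd, ds)" "prange r (vd, ds) = prange r (vc, cs)" "epath (vc, cs)"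
    using assms by (auto simp: x y GEl_in_gis_carrier)
  consider (left) "path_prefix (vb, bs) (vc, cs)" | (right) "path_prefix (vc, cs) (vb, bs)"
    | (zero) "gis_mult x y = GZero"
    using gis_mult_incomparable x y by blast
  then show ?thesis
  proof cases
    case left
    then obtain w where "vc = vb" "cs = bs @ w"
      by (auto simp: path_prefix_def prefix_def)
    then show ?thesis
      using ab cd epath_append_same_range[OF ab(1,2), of w]
      by (simp add: x y gis_mult_append_left GEl_in_gis_carrier)
  next
    case right
    then obtain w where "vb = vc" "bs = cs @ w"
      by (auto simp: path_prefix_def prefix_def)
    then show ?thesis
      using ab cd epath_append_same_range[OF cd(1,2), of w]
      by (simp add: x y gis_mult_append_right GEl_in_gis_carrier)
  qed (simp add: GZero_in_gis_carrier)
qed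

lemma continuous_if_finite_fibres:
  assumes "\<forall>z\<in>GE. z \<noteq> GZero \<longrightarrow> finite {(x, y). x \<in> GE \<and> y \<in> GE \<and> gis_mult x y = z}"
  shows "continuous_map (prod_topology (tau_c GE GZero) (tau_c GE GZero)) (tau_c GE GZero)
    (\<lambda>(x, y). gis_mult x y)"
  using assms by (intro continuous_map_tau_c_mult gis_mult_closed) auto

lemma finite_paths_to_if_continuous:
  assumes cont: "continuous_map (prod_topology (tau_c GE GZero) (tau_c GE GZero)) (tau_c GE GZero)
    (\<lambda>(x, y). gis_mult x y)"
  shows "\<forall>e\<in>V. finite (paths_to e)"
proof
  fix e
  assume "e \<in> V"
  let ?e = "(e, []) :: ('v, 'e) gpath"
  obtain F where "finite F"
    and F: "\<And>x y. x \<in> GE \<Longrightarrow> y \<in> GE \<Longrightarrow> gis_mult x y = GEl ?e ?e \<Longrightarrow> x \<in> F \<or> y \<in> F"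
    using continuous_map_tau_c_mult_fibre[OF cont GZero_in_gis_carrier] by auto
  have "paths_to e \<subseteq> GEl ?e -` F \<union> (\<lambda>u. GEl u ?e) -` F"
  proof
    fix u
    assume "u \<in> paths_to e"
    then have "GEl ?e u \<in> GE" "GEl u ?e \<in> GE"
      using \<open>e \<in> V\<close> by (auto simp: GEl_in_gis_carrier is_path_Nil)
    moreover have "gis_mult (GEl ?e u) (GEl u ?e) = GEl ?e ?e"
      by simp
    ultimately show "u \<in> GEl ?e -` F \<union> (\<lambda>u. GEl u ?e) -` F"
      using F by blast
  qed
  moreover have "finite (GEl ?e -` F \<union> (\<lambda>u. GEl u ?e) -` F)"
    using \<open>finite F\<close> by (auto intro!: finite_vimageI injI)
  ultimately show "finite (paths_to e)"
    by (rule finite_subset)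
qed

lemma finite_fibres_if_finite_paths_to:
  assumes fin: "\<forall>e\<in>V. finite (paths_to e)"
  shows "\<forall>z\<in>GE. z \<noteq> GZero \<longrightarrow> finite {(x, y). x \<in> GE \<and> y \<in> GE \<and> gis_mult x y = z}"
proof (intro ballI impI)
  fix z
  assume "z \<in> GE" "z \<noteq> GZero"
  then obtain u v where z: "z = GEl u v"
    by (cases z) auto
  have fin_all: "finite (paths_to e)" for e
    using fin paths_to_outside_V[of e] by (cases "e \<in> V") (simp, metis finite.emptyI)
  define L where "L = (SIGMA a:{a. path_prefix a u}. paths_to (prange r a))"
  define R where "R = (SIGMA d:{d. path_prefix d v}. paths_to (prange r d))"
  have "{(x, y). x \<in> GE \<and> y \<in> GE \<and> gis_mult x y = z}
    \<subseteq> (\<lambda>((a, b), (d, c)). (GEl a b, GEl c d)) ` (L \<times> R)"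
  proof
    fix p
    assume "p \<in> {(x, y). x \<in> GE \<and> y \<in> GE \<and> gis_mult x y = z}"
    then obtain x y where p: "p = (x, y)" and "x \<in> GE" "y \<in> GE" and xy: "gis_mult x y = z"
      by blast
    then obtain a b c d where x: "x = GEl a b" and y: "y = GEl c d"
      using z by (cases x; cases y) auto
    have "((a, b), (d, c)) \<in> L \<times> R"
      using \<open>x \<in> GE\<close> \<open>y \<in> GE\<close> gis_mult_eq_GEl_left[of a b y u v] gis_mult_eq_GEl_right[of x c d u v] xy
      by (simp add: L_def R_def x y z GEl_in_gis_carrier)
    then show "p \<in> (\<lambda>((a, b), (d, c)). (GEl a b, GEl c d)) ` (L \<times> R)"
      unfolding p x y by force
  qed
  moreover have "finite (L \<times> R)"
    unfolding L_def R_def using finite_path_prefixes fin_all by blast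
  ultimately show "finite {(x, y). x \<in> GE \<and> y \<in> GE \<and> gis_mult x y = z}"
    using finite_subset by blast
qed

lemma greenD_class_GEl:
  assumes "greenD GE gis_mult (GEl u v) b" "b \<in> GE"
  shows "b \<in> (\<lambda>(p, q). GEl p q) ` (paths_to (prange r v) \<times> paths_to (prange r v))"
proof -
  obtain c where "c \<in> GE" "greenL GE gis_mult (GEl u v) c" "greenR GE gis_mult c b"
    using assms(1) unfolding greenD_def by blast
  then obtain p q where "c = GEl p v" "b = GEl p q"
    using greenL_GEl greenR_GEl by metis
  then show ?thesis
    using \<open>c \<in> GE\<close> \<open>b \<in> GE\<close> by (auto simp: GEl_in_gis_carrier)
qed

lemma finite_greenD_if_finite_paths_to:
  assumes fin: "\<forall>e\<in>V. finite (paths_to e)"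
  shows "\<forall>a\<in>GE. finite {b \<in> GE. greenD GE gis_mult a b}"
proof
  fix a
  assume "a \<in> GE"
  show "finite {b \<in> GE. greenD GE gis_mult a b}"
  proof (cases a)
    case GZero
    then have "{b \<in> GE. greenD GE gis_mult a b} \<subseteq> {GZero}"
      using greenD_GZero by blast
    then show ?thesis
      by (rule finite_subset) simp
  next
    case (GEl u v)
    then have "prange r v \<in> V"
      using \<open>a \<in> GE\<close> prange_in_V by (simp add: GEl_in_gis_carrier)
    have "{b \<in> GE. greenD GE gis_mult a b}
      \<subseteq> (\<lambda>(p, q). GEl p q) ` (paths_to (prange r v) \<times> paths_to (prange r v))"
      using greenD_class_GEl GEl by blast
    moreover have "finite ((\<lambda>(p, q). GEl p q) ` (paths_to (prange r v) \<times> paths_to (prange r v)))"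
      using fin \<open>prange r v \<in> V\<close> by simp
    ultimately show ?thesis
      by (rule finite_subset)
  qed
qed

lemma epath_cycle_power:
  assumes "epath (e, cs)" "prange r (e, cs) = e"
  shows "epath (e, concat (replicate n cs)) \<and> prange r (e, concat (replicate n cs)) = e"
proof (induction n)
  case 0
  have "e \<in> V"
    using assms(1) by (simp add: is_path_def)
  then show ?case
    by (simp add: is_path_Nil)
next
  case (Suc n)
  then show ?case
    using assms by (simp add: epath_append prange_append)
qed

lemma bicyclic_embedding:
  assumes "on_cycle e"
  shows "has_iso_subsemigroup GE gis_mult UNIV bicyclic_mult"
proof -
  obtain cs where "cs \<noteq> []" and cycle: "epath (e, cs)" "prange r (e, cs) = e"
    using assms unfolding on_cycle_def by blast
  define pow where "pow n = concat (replicate n cs)" for n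
  have pow_add: "pow (i + j) = pow i @ pow j" for i j
    by (simp add: pow_def replicate_add)
  have "length (pow n) = n * length cs" for n
    by (induction n) (simp_all add: pow_def)
  then have "inj pow"
    using \<open>cs \<noteq> []\<close> by (intro injI) (metis length_0_conv mult_right_cancel)
  define f where "f = (\<lambda>(i, j). GEl (e, pow i) (e, pow j))"
  have "f (bicyclic_mult (i, j) (k, l)) = gis_mult (f (i, j)) (f (k, l))" for i j k l
  proof (cases "j \<le> k")
    case True
    then have "pow k = pow j @ pow (k - j)" "pow (i + k - j) = pow i @ pow (k - j)"
      using pow_add by (metis le_add_diff_inverse, metis Nat.add_diff_assoc)
    then show ?thesis
      using True by (simp add: f_def gis_mult_append_left del: gis_mult.simps)
  next
    case False
    then have "pow j = pow k @ pow (j - k)" "pow (j + l - k) = pow l @ pow (j - k)"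
      using pow_add by (metis le_add_diff_inverse nat_le_linear, metis add.commute Nat.add_diff_assoc nat_le_linear)
    then show ?thesis
      using False by (simp add: f_def gis_mult_append_right del: gis_mult.simps)
  qed
  moreover have "range f \<subseteq> GE"
    using epath_cycle_power[OF cycle] by (auto simp: f_def pow_def GEl_in_gis_carrier)
  moreover have "inj f"
    using \<open>inj pow\<close> by (auto simp: f_def inj_def)
  ultimately show ?thesis
    by (intro has_iso_subsemigroupI) auto
qed

lemma path_prefix_paths_to_eq:
  assumes "\<not> on_cycle e" "p \<in> paths_to e" "q \<in> paths_to e" "path_prefix p q"
  shows "p = q"
proof -
  obtain w where q: "q = (fst p, snd p @ w)"
    using assms(4) by (auto simp: path_prefix_def prefix_def prod_eq_iff)
  then have "epath (e, w) \<and> prange r (e, w) = e"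
    using assms(2,3) epath_append[of "fst p" "snd p" w] prange_append[of r "fst p" "snd p" w] by simp
  then have "w = []"
    using assms(1) unfolding on_cycle_def by blast
  then show ?thesis
    by (simp add: q)
qed

lemma matunit_embedding:
  assumes "\<not> on_cycle e" "infinite (paths_to e)"
  shows "has_iso_subsemigroup GE gis_mult UNIV matunit_mult"
proof -
  obtain g :: "nat \<Rightarrow> ('v, 'e) gpath" where "inj g" and g: "\<And>i. g i \<in> paths_to e"
    using infinite_countable_subset[OF assms(2)] by blast
  have incomparable: "\<not> path_prefix (g j) (g k)" if "j \<noteq> k" for j k
  proof
    assume "path_prefix (g j) (g k)"
    then have "g j = g k"
      using path_prefix_paths_to_eq[OF assms(1) g g] by blast
    then show False
      using \<open>inj g\<close> that by (simp add: inj_eq)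
  qed
  define f where "f = case_option GZero (\<lambda>(i, j). GEl (g i) (g j))"
  have "f (matunit_mult x y) = gis_mult (f x) (f y)" for x y
  proof (cases "x = None \<or> y = None")
    case True
    then show ?thesis
      by (auto simp: f_def)
  next
    case False
    then obtain i j k l where "x = Some (i, j)" "y = Some (k, l)"
      by (metis not_None_eq surj_pair)
    then show ?thesis
      using incomparable[of j k] incomparable[of k j]
      by (cases "j = k") (simp_all add: f_def gis_mult_incomparable del: gis_mult.simps)
  qed
  moreover have "range f \<subseteq> GE"
    using g by (auto simp: f_def GEl_in_gis_carrier GZero_in_gis_carrier split: option.splits)
  moreover have "inj f"
    using \<open>inj g\<close> by (auto simp: f_def inj_def inj_eq split: option.splits)
  ultimately show ?thesis
    by (intro has_iso_subsemigroupI) auto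
qed

lemma finite_paths_to_if_no_embedding:
  assumes "\<not> has_iso_subsemigroup GE gis_mult (UNIV :: (nat \<times> nat) set) bicyclic_mult
    \<and> \<not> has_iso_subsemigroup GE gis_mult (UNIV :: (nat \<times> nat) option set) matunit_mult"
  shows "\<forall>e\<in>V. finite (paths_to e)"
  using assms bicyclic_embedding matunit_embedding by blast

end

theorem theorem2p4:
  fixes V :: "'v set" and Ed :: "'e set" and s r :: "'e \<Rightarrow> 'v"
  assumes "s ` Ed \<subseteq> V" and "r ` Ed \<subseteq> V"
  defines "G \<equiv> gis_carrier V Ed s r"
  shows "(continuous_map (prod_topology (tau_c G GZero) (tau_c G GZero)) (tau_c G GZero)
            (\<lambda>(x, y). gis_mult x y)
          \<longleftrightarrow> (\<forall>z\<in>G. z \<noteq> GZero \<longrightarrow> finite {(x, y). x \<in> G \<and> y \<in> G \<and> gis_mult x y = z}))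
       \<and> ((\<forall>z\<in>G. z \<noteq> GZero \<longrightarrow> finite {(x, y). x \<in> G \<and> y \<in> G \<and> gis_mult x y = z})
          \<longleftrightarrow> (\<forall>e\<in>V. finite {u. is_path V Ed s r u \<and> prange r u = e}))
       \<and> ((\<forall>e\<in>V. finite {u. is_path V Ed s r u \<and> prange r u = e})
          \<longleftrightarrow> \<not> has_iso_subsemigroup G gis_mult (UNIV :: (nat \<times> nat) set) bicyclic_mult
              \<and> \<not> has_iso_subsemigroup G gis_mult (UNIV :: (nat \<times> nat) option set) matunit_mult)
       \<and> ((\<not> has_iso_subsemigroup G gis_mult (UNIV :: (nat \<times> nat) set) bicyclic_mult
              \<and> \<not> has_iso_subsemigroup G gis_mult (UNIV :: (nat \<times> nat) option set) matunit_mult)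
          \<longleftrightarrow> (\<forall>a\<in>G. finite {b \<in> G. greenD G gis_mult a b}))"
proof -
  interpret graph_inverse_semigroup V Ed s r
    using assms(2) by unfold_locales
  show ?thesis
    unfolding G_def
    using continuous_if_finite_fibres finite_paths_to_if_continuous finite_fibres_if_finite_paths_to
      finite_greenD_if_finite_paths_to
      not_has_iso_subsemigroup_if_finite_greenD[OF _ UNIV_I infinite_greenD_class_bicyclic]
      not_has_iso_subsemigroup_if_finite_greenD[OF _ UNIV_I infinite_greenD_class_matunit]
      finite_paths_to_if_no_embedding
    by blast
qed

end
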